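(* For all nonnegative integers $i_1,\dots,i_n$ and $j_1,\dots,j_n$, $$e_{i_1,\dots,i_n}\le e_{i_1+j_1,\dots,i_n+j_n}\le e_{i_1,\dots,i_n}+e_{j_1,\dots,j_n},$$ and moreover $e_{i_1,\dots,i_n}\le 6\sqrt{i_1+\dots+i_n}$.
   Context: Let $(U_{\ell,r})_{\ell,r\ge1}$ be i.i.d. uniform random variables on $[0,1]$. For nonnegative integers $i_1,\dots,i_n$ let $\mathcal S_{i_1,\dots,i_n}=\bigcup_{\ell=1}^n\bigcup_{r=1}^{i_\ell}\{(U_{\ell,r},\ell)\}$ ($i_\ell$ uniform points on the horizontal line at height $\ell$), and $e_{i_1,\dots,i_n}=\mathbb E[\mathcal L_<(\mathcal S_{i_1,\dots,i_n})]$, where for a finite point set $\mathcal P$, $\mathcal L_<(\mathcal P)$ is the maximal length of a chain $P_1\prec\dots\prec P_L$ in $\mathcal P$, with $(a,b)\prec(a',b')$ iff $a<a'$ and $b<b'$. *)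

theory Defs
  imports "HOL-Probability.Probability"
begin

definition prec :: "real \<times> real \<Rightarrow> real \<times> real \<Rightarrow> bool" where
  "prec p q \<longleftrightarrow> fst p < fst q \<and> snd p < snd q"

definition chainLen :: "(real \<times> real) set \<Rightarrow> nat" where
  "chainLen P = Max {length xs | xs. set xs \<subseteq> P \<and> sorted_wrt prec xs}"

definition ptSet :: "nat \<Rightarrow> (nat \<Rightarrow> nat) \<Rightarrow> (nat \<times> nat \<Rightarrow> real) \<Rightarrow> (real \<times> real) set" where
  "ptSet n i u = {(u (l, r), real l) | l r. l \<in> {1..n} \<and> r \<in> {1..i l}}"

text \<open>Law of the i.i.d. family (U_{l,r}) of uniform variables on [0,1].\<close>
definition Umeas :: "(nat \<times> nat \<Rightarrow> real) measure" where
  "Umeas = PiM UNIV (\<lambda>_. uniform_measure lborel {0..1::real})"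

definition eL :: "nat \<Rightarrow> (nat \<Rightarrow> nat) \<Rightarrow> real" where
  "eL n i = (\<integral>u. real (chainLen (ptSet n i u)) \<partial>Umeas)"

end

theory Submission
  imports Defs "HOL-Combinatorics.Permutations"
begin

text \<open>A chain of \<open>S\<^sub>i\<close> is the same as a set of indices \<open>(l, r)\<close> with distinct heights \<open>l\<close>
whose labels \<open>U\<^sub>l\<^sub>,\<^sub>r\<close> increase with \<open>l\<close>. The first two inequalities hold pointwise:
\<open>S\<^sub>i \<subseteq> S\<^sub>i\<^sub>+\<^sub>j\<close>, and \<open>S\<^sub>i\<^sub>+\<^sub>j\<close> is the union of \<open>S\<^sub>i\<close> and a copy of \<open>S\<^sub>j\<close> built from the
labels \<open>U\<^sub>l\<^sub>,\<^sub>r\<^sub>+\<^sub>i\<^sub>l\<close>, which are again i.i.d. uniform; chain length is monotone and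
subadditive under union. For the bound, a fixed set of \<open>k\<close> indices at distinct heights is a chain
with probability at most \<open>1/k!\<close>, because the \<open>k!\<close> events obtained by permuting its labels are
disjoint and equiprobable. Hence \<open>P(L \<ge> k) \<le> min 1 (C(N,k)/k!)\<close> with \<open>N = \<Sum>i\<^sub>l\<close>, and summing
these tails using \<open>k! \<ge> (k/3)\<^sup>k\<close> gives \<open>E L \<le> \<surd>(18N) + 1 \<le> 6\<surd>N\<close>.\<close>

definition prec_chain :: "(real \<times> real) set \<Rightarrow> bool" where
  "prec_chain C \<longleftrightarrow> (\<forall>p\<in>C. \<forall>q\<in>C. p \<noteq> q \<longrightarrow> prec p q \<or> prec q p)"

lemma prec_chain_subset: "prec_chain C \<Longrightarrow> D \<subseteq> C \<Longrightarrow> prec_chain D"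
  unfolding prec_chain_def by blast

lemma prec_chain_set_if_sorted_wrt:
  "sorted_wrt prec xs \<Longrightarrow> prec_chain (set xs) \<and> distinct xs"
  by (induction xs) (auto simp: prec_chain_def prec_def)

lemma sorted_wrt_prec_if_prec_chain:
  assumes "finite C" "prec_chain C"
  obtains xs where "set xs = C" "distinct xs" "sorted_wrt prec xs"
proof -
  obtain ys where ys: "set ys = C" "distinct ys" using finite_distinct_list[OF assms(1)] by blast
  define xs where "xs = sort_key snd ys"
  have "inj_on snd C"
    using assms(2) unfolding inj_on_def prec_chain_def prec_def
    by (metis less_irrefl)
  then have "distinct (map snd xs)"
    using ys by (simp add: xs_def distinct_map)
  moreover have "sorted (map snd xs)"
    by (simp add: xs_def)
  ultimately have "sorted_wrt (<) (map snd xs)"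
    by (simp only: strict_sorted_iff)
  then have "sorted_wrt (\<lambda>p q. snd p < snd q) xs"
    by (simp add: sorted_wrt_map)
  then have "sorted_wrt prec xs"
  proof (rule sorted_wrt_mono_rel[rotated])
    fix p q assume "p \<in> set xs" "q \<in> set xs" "snd p < snd q"
    then have "prec p q \<or> prec q p"
      using assms(2) ys unfolding prec_chain_def xs_def by force
    then show "prec p q"
      using \<open>snd p < snd q\<close> unfolding prec_def by auto
  qed
  moreover have "set xs = C" "distinct xs"
    using ys by (simp_all add: xs_def)
  ultimately show ?thesis using that by blast
qed

lemma chainLen_eq_Max_card:
  assumes "finite P"
  shows "chainLen P = Max {card C | C. C \<subseteq> P \<and> prec_chain C}"
proof -
  have "{length xs | xs. set xs \<subseteq> P \<and> sorted_wrt prec xs} = {card C | C. C \<subseteq> P \<and> prec_chain C}"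
  proof (intro set_eqI iffI)
    fix m assume "m \<in> {length xs | xs. set xs \<subseteq> P \<and> sorted_wrt prec xs}"
    then obtain xs where "m = length xs" "set xs \<subseteq> P" "sorted_wrt prec xs" by blast
    then show "m \<in> {card C | C. C \<subseteq> P \<and> prec_chain C}"
      using prec_chain_set_if_sorted_wrt[of xs] distinct_card[of xs]
      by (intro CollectI exI[of _ "set xs"]) simp
  next
    fix m assume "m \<in> {card C | C. C \<subseteq> P \<and> prec_chain C}"
    then obtain C where C: "C \<subseteq> P" "prec_chain C" "m = card C" by blast
    moreover obtain xs where "set xs = C" "distinct xs" "sorted_wrt prec xs"
      using sorted_wrt_prec_if_prec_chain[OF finite_subset[OF C(1) assms] C(2)] by blast
    ultimately show "m \<in> {length xs | xs. set xs \<subseteq> P \<and> sorted_wrt prec xs}"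
      using distinct_card[of xs] by auto
  qed
  then show ?thesis by (simp only: chainLen_def)
qed

lemma chainLen_ge_iff:
  assumes "finite P"
  shows "k \<le> chainLen P \<longleftrightarrow> (\<exists>C\<subseteq>P. card C = k \<and> prec_chain C)"
proof -
  have "{card C | C. C \<subseteq> P \<and> prec_chain C} \<subseteq> card ` Pow P"
    by blast
  then have fin: "finite {card C | C. C \<subseteq> P \<and> prec_chain C}"
    using assms by (simp add: finite_subset)
  have "{} \<subseteq> P \<and> prec_chain {}" by (simp add: prec_chain_def)
  then have ne: "{card C | C. C \<subseteq> P \<and> prec_chain C} \<noteq> {}" by blast
  have "k \<le> chainLen P \<longleftrightarrow> (\<exists>C\<subseteq>P. k \<le> card C \<and> prec_chain C)"
    unfolding chainLen_eq_Max_card[OF assms] Max_ge_iff[OF fin ne] by blast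
  also have "\<dots> \<longleftrightarrow> (\<exists>C\<subseteq>P. card C = k \<and> prec_chain C)"
  proof
    assume "\<exists>C\<subseteq>P. k \<le> card C \<and> prec_chain C"
    then obtain C where C: "C \<subseteq> P" "k \<le> card C" "prec_chain C" by blast
    obtain D where "D \<subseteq> C" "card D = k"
      using obtain_subset_with_card_n[OF C(2)] by blast
    then show "\<exists>C\<subseteq>P. card C = k \<and> prec_chain C"
      using C prec_chain_subset by blast
  qed auto
  finally show ?thesis .
qed

lemma card_le_chainLen: "finite P \<Longrightarrow> C \<subseteq> P \<Longrightarrow> prec_chain C \<Longrightarrow> card C \<le> chainLen P"
  using chainLen_ge_iff by blast

lemma chainLen_obtain:
  assumes "finite P"
  obtains C where "C \<subseteq> P" "card C = chainLen P" "prec_chain C"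
  using chainLen_ge_iff[OF assms, of "chainLen P"] by blast

lemma chainLen_le_card:
  assumes "finite P"
  shows "chainLen P \<le> card P"
proof -
  obtain C where "C \<subseteq> P" "card C = chainLen P"
    using chainLen_obtain[OF assms] by blast
  then show ?thesis using card_mono[OF assms, of C] by simp
qed

lemma chainLen_mono:
  assumes "finite Q" "P \<subseteq> Q"
  shows "chainLen P \<le> chainLen Q"
proof -
  obtain C where "C \<subseteq> P" "card C = chainLen P" "prec_chain C"
    using chainLen_obtain[OF finite_subset[OF assms(2,1)]] by blast
  then show ?thesis using card_le_chainLen[OF assms(1), of C] assms(2) by simp
qed

lemma chainLen_Un:
  assumes "finite A" "finite B"
  shows "chainLen (A \<union> B) \<le> chainLen A + chainLen B"
proof -
  obtain C where C: "C \<subseteq> A \<union> B" "card C = chainLen (A \<union> B)" "prec_chain C"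
    using chainLen_obtain[OF finite_UnI[OF assms]] by blast
  have "card C \<le> card (C \<inter> A) + card (C - A)"
    by (metis card_Un_le Int_Diff_Un)
  also have "card (C \<inter> A) \<le> chainLen A"
    using C(3) by (intro card_le_chainLen assms(1)) (auto intro: prec_chain_subset)
  also have "card (C - A) \<le> chainLen B"
    using C by (intro card_le_chainLen assms(2)) (auto intro: prec_chain_subset)
  finally show ?thesis using C(2) by simp
qed

lemma prec_chain_image_iff:
  fixes u :: "nat \<times> 'b \<Rightarrow> real"
  assumes "inj_on (\<lambda>a. (u a, real (fst a))) S"
  shows "prec_chain ((\<lambda>a. (u a, real (fst a))) ` S) \<longleftrightarrow>
    inj_on fst S \<and> monotone_on S (\<lambda>a b. fst a < fst b) (<) u"
proof -
  have pairwise_iff: "prec_chain ((\<lambda>a. (u a, real (fst a))) ` S) \<longleftrightarrow>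
      (\<forall>a\<in>S. \<forall>b\<in>S. a \<noteq> b \<longrightarrow> fst a < fst b \<and> u a < u b \<or> fst b < fst a \<and> u b < u a)"
    using assms unfolding prec_chain_def prec_def inj_on_def by auto
  show ?thesis
  proof (unfold pairwise_iff, intro iffI conjI ballI impI)
    assume H: "\<forall>a\<in>S. \<forall>b\<in>S. a \<noteq> b \<longrightarrow> fst a < fst b \<and> u a < u b \<or> fst b < fst a \<and> u b < u a"
    show "inj_on fst S"
      by (rule inj_onI) (use H in force)
  next
    assume H: "\<forall>a\<in>S. \<forall>b\<in>S. a \<noteq> b \<longrightarrow> fst a < fst b \<and> u a < u b \<or> fst b < fst a \<and> u b < u a"
    show "monotone_on S (\<lambda>a b. fst a < fst b) (<) u"
      by (rule monotone_onI) (use H in force)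
  next
    fix a b
    assume "inj_on fst S \<and> monotone_on S (\<lambda>a b. fst a < fst b) (<) u" "a \<in> S" "b \<in> S" "a \<noteq> b"
    then show "fst a < fst b \<and> u a < u b \<or> fst b < fst a \<and> u b < u a"
      by (metis inj_on_def linorder_neqE_nat monotone_onD)
  qed
qed

lemma chainLen_image_ge_iff:
  fixes u :: "nat \<times> 'b \<Rightarrow> real"
  assumes "finite I"
  shows "k \<le> chainLen ((\<lambda>a. (u a, real (fst a))) ` I) \<longleftrightarrow>
    (\<exists>S\<subseteq>I. card S = k \<and> inj_on fst S \<and> monotone_on S (\<lambda>a b. fst a < fst b) (<) u)"
proof -
  let ?\<phi> = "\<lambda>a. (u a, real (fst a))"
  have chain_iff: "inj_on ?\<phi> S \<and> card (?\<phi> ` S) = k \<and> prec_chain (?\<phi> ` S) \<longleftrightarrow>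
      card S = k \<and> inj_on fst S \<and> monotone_on S (\<lambda>a b. fst a < fst b) (<) u" for S
  proof -
    have "inj_on fst S \<Longrightarrow> inj_on ?\<phi> S"
      by (auto simp: inj_on_def)
    then show ?thesis
      using prec_chain_image_iff[of u S] card_image[of ?\<phi> S] by (cases "inj_on ?\<phi> S") auto
  qed
  have "k \<le> chainLen (?\<phi> ` I) \<longleftrightarrow> (\<exists>C\<subseteq>?\<phi> ` I. card C = k \<and> prec_chain C)"
    using assms by (simp add: chainLen_ge_iff)
  also have "\<dots> \<longleftrightarrow> (\<exists>S\<subseteq>I. inj_on ?\<phi> S \<and> card (?\<phi> ` S) = k \<and> prec_chain (?\<phi> ` S))"
  proof
    assume "\<exists>C\<subseteq>?\<phi> ` I. card C = k \<and> prec_chain C"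
    then obtain C where C: "C \<subseteq> ?\<phi> ` I" "card C = k" "prec_chain C" by blast
    obtain S where "S \<subseteq> I" "inj_on ?\<phi> S" "C = ?\<phi> ` S"
      using subset_image_inj[THEN iffD1, OF C(1)] by blast
    with C show "\<exists>S\<subseteq>I. inj_on ?\<phi> S \<and> card (?\<phi> ` S) = k \<and> prec_chain (?\<phi> ` S)" by blast
  next
    assume "\<exists>S\<subseteq>I. inj_on ?\<phi> S \<and> card (?\<phi> ` S) = k \<and> prec_chain (?\<phi> ` S)"
    then obtain S where "S \<subseteq> I" "card (?\<phi> ` S) = k" "prec_chain (?\<phi> ` S)" by blast
    then show "\<exists>C\<subseteq>?\<phi> ` I. card C = k \<and> prec_chain C"
      by (intro exI[of _ "?\<phi> ` S"]) blast
  qed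
  also have "\<dots> \<longleftrightarrow>
      (\<exists>S\<subseteq>I. card S = k \<and> inj_on fst S \<and> monotone_on S (\<lambda>a b. fst a < fst b) (<) u)"
    by (simp only: chain_iff)
  finally show ?thesis .
qed

lemma card_less_permutes_monotone_on:
  fixes f :: "'a \<Rightarrow> 'k::linorder" and u :: "'a \<Rightarrow> 'v::linorder"
  assumes "inj_on f S" "\<sigma> permutes S" "monotone_on S (\<lambda>a b. f a < f b) (<) (u \<circ> \<sigma>)" "a \<in> S"
  shows "card {c\<in>S. u c < u (\<sigma> a)} = card {b\<in>S. f b < f a}"
proof -
  have "{c\<in>S. u c < u (\<sigma> a)} = \<sigma> ` {b\<in>S. u (\<sigma> b) < u (\<sigma> a)}"
    using permutes_image[OF assms(2)] by auto
  also have "card \<dots> = card {b\<in>S. u (\<sigma> b) < u (\<sigma> a)}"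
    by (rule card_image) (meson assms(2) inj_on_subset permutes_inj_on subset_UNIV)
  also have "{b\<in>S. u (\<sigma> b) < u (\<sigma> a)} = {b\<in>S. f b < f a}"
    using assms(1,3,4) unfolding monotone_on_def inj_on_def
    by (auto, metis less_asym' linorder_neqE)
  finally show ?thesis .
qed

lemma permutes_monotone_on_unique:
  fixes f :: "'a \<Rightarrow> 'k::linorder" and u :: "'a \<Rightarrow> 'v::linorder"
  assumes "finite S" "inj_on f S" "\<sigma> permutes S" "\<tau> permutes S"
    and \<sigma>: "monotone_on S (\<lambda>a b. f a < f b) (<) (u \<circ> \<sigma>)"
    and \<tau>: "monotone_on S (\<lambda>a b. f a < f b) (<) (u \<circ> \<tau>)"
  shows "\<sigma> = \<tau>"
proof
  fix a
  show "\<sigma> a = \<tau> a"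
  proof (cases "a \<in> S")
    case False
    then show ?thesis using assms(3,4) by (simp add: permutes_not_in)
  next
    case True
    have "inj_on (u \<circ> \<sigma>) S"
      using \<sigma> assms(2) unfolding monotone_on_def inj_on_def
      by (metis linorder_neqE order_less_irrefl)
    then have inj_u: "inj_on u S"
      using permutes_image[OF assms(3)] by (metis comp_inj_on_iff inj_on_imageI)
    have in_S: "\<sigma> a \<in> S" "\<tau> a \<in> S"
      using True assms(3,4) by (simp_all add: permutes_in_image)
    have card_eq: "card {c\<in>S. u c < u (\<sigma> a)} = card {c\<in>S. u c < u (\<tau> a)}"
      using card_less_permutes_monotone_on[OF assms(2) assms(3) \<sigma> True]
        card_less_permutes_monotone_on[OF assms(2) assms(4) \<tau> True] by simp
    have card_less: "card {c\<in>S. u c < u x} < card {c\<in>S. u c < u y}"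
      if "x \<in> S" "u x < u y" for x y
    proof (rule psubset_card_mono)
      show "finite {c\<in>S. u c < u y}"
        using assms(1) by simp
      have "{c\<in>S. u c < u x} \<subseteq> {c\<in>S. u c < u y}"
        using that(2) by (blast intro: order.strict_trans)
      moreover have "x \<in> {c\<in>S. u c < u y} - {c\<in>S. u c < u x}"
        using that by simp
      ultimately show "{c\<in>S. u c < u x} \<subset> {c\<in>S. u c < u y}"
        by blast
    qed
    have "\<not> u (\<sigma> a) < u (\<tau> a)"
      using card_less[OF in_S(1), of "\<tau> a"] card_eq by auto
    moreover have "\<not> u (\<tau> a) < u (\<sigma> a)"
      using card_less[OF in_S(2), of "\<sigma> a"] card_eq by auto
    ultimately have "u (\<sigma> a) = u (\<tau> a)"
      by (cases "u (\<sigma> a)" "u (\<tau> a)" rule: linorder_cases) simp_all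
    then show ?thesis using inj_u in_S by (simp add: inj_on_def)
  qed
qed

lemma prob_space_Umeas: "prob_space Umeas"
  unfolding Umeas_def by (intro prob_space_PiM prob_space_uniform_measure) auto

lemma space_Umeas: "space Umeas = UNIV"
  by (simp add: Umeas_def space_PiM)

lemma measurable_reindex_Umeas: "(\<lambda>u. u \<circ> f) \<in> Umeas \<rightarrow>\<^sub>M Umeas"
  unfolding Umeas_def comp_def
  by (rule measurable_PiM_single') (auto simp: space_PiM intro: measurable_component_singleton)

lemma distr_reindex_Umeas:
  assumes "inj f"
  shows "distr Umeas Umeas (\<lambda>u. u \<circ> f) = Umeas"
proof -
  let ?M = "uniform_measure lborel {0..1::real}"
  have "distr (PiM UNIV (\<lambda>_. ?M)) (PiM UNIV (\<lambda>_. ?M)) (\<lambda>u. \<lambda>a\<in>UNIV. u (f a))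
      = PiM UNIV (\<lambda>_. ?M)"
    using distr_PiM_reindex[of UNIV "\<lambda>_. ?M" f UNIV] assms
    by (simp add: prob_space_uniform_measure)
  then show ?thesis unfolding Umeas_def comp_def by (simp add: restrict_def)
qed

lemma integral_reindex_Umeas:
  fixes g :: "(nat \<times> nat \<Rightarrow> real) \<Rightarrow> real"
  assumes "inj f" "g \<in> borel_measurable Umeas"
  shows "integrable Umeas (\<lambda>u. g (u \<circ> f)) \<longleftrightarrow> integrable Umeas g"
    and "(\<integral>u. g (u \<circ> f) \<partial>Umeas) = (\<integral>u. g u \<partial>Umeas)"
proof -
  have "integrable (distr Umeas Umeas (\<lambda>u. u \<circ> f)) g \<longleftrightarrow> integrable Umeas (\<lambda>u. g (u \<circ> f))"
    by (rule integrable_distr_eq[OF measurable_reindex_Umeas assms(2)])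
  then show "integrable Umeas (\<lambda>u. g (u \<circ> f)) \<longleftrightarrow> integrable Umeas g"
    by (simp add: distr_reindex_Umeas[OF assms(1)])
  have "(\<integral>u. g u \<partial>distr Umeas Umeas (\<lambda>u. u \<circ> f)) = (\<integral>u. g (u \<circ> f) \<partial>Umeas)"
    by (rule integral_distr[OF measurable_reindex_Umeas assms(2)])
  then show "(\<integral>u. g (u \<circ> f) \<partial>Umeas) = (\<integral>u. g u \<partial>Umeas)"
    by (simp add: distr_reindex_Umeas[OF assms(1)])
qed

lemma sets_monotone_on_Umeas[measurable]:
  "{u. monotone_on S (\<lambda>a b. f a < f b) (<) u} \<in> sets Umeas"
proof -
  have "Measurable.pred Umeas (\<lambda>u. monotone_on S (\<lambda>a b. f a < f b) (<) u)"
    unfolding monotone_on_def Umeas_def by measurable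
  then show ?thesis by (simp add: pred_def space_Umeas)
qed

lemma measure_monotone_on_Umeas_le:
  fixes f :: "nat \<times> nat \<Rightarrow> 'k::linorder"
  assumes "finite S" "inj_on f S"
  shows "measure Umeas {u. monotone_on S (\<lambda>a b. f a < f b) (<) u} \<le> 1 / fact (card S)"
proof -
  interpret prob_space Umeas by (rule prob_space_Umeas)
  let ?A = "{u :: nat \<times> nat \<Rightarrow> real. monotone_on S (\<lambda>a b. f a < f b) (<) u}"
  define E where "E \<sigma> = (\<lambda>u. u \<circ> \<sigma>) -` ?A \<inter> space Umeas" for \<sigma> :: "nat \<times> nat \<Rightarrow> nat \<times> nat"
  let ?P = "{\<sigma>. \<sigma> permutes S}"
  have sets_E: "E \<sigma> \<in> sets Umeas" for \<sigma>
    unfolding E_def by (rule measurable_sets[OF measurable_reindex_Umeas sets_monotone_on_Umeas])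
  have measure_E: "measure Umeas (E \<sigma>) = measure Umeas ?A" if "\<sigma> \<in> ?P" for \<sigma>
  proof -
    have "measure (distr Umeas Umeas (\<lambda>u. u \<circ> \<sigma>)) ?A = measure Umeas (E \<sigma>)"
      unfolding E_def by (rule measure_distr[OF measurable_reindex_Umeas sets_monotone_on_Umeas])
    then show ?thesis
      using that by (simp add: distr_reindex_Umeas permutes_inj)
  qed
  have "disjoint_family_on E ?P"
    using permutes_monotone_on_unique[OF assms] by (auto simp: disjoint_family_on_def E_def)
  then have "measure Umeas (\<Union>\<sigma>\<in>?P. E \<sigma>) = (\<Sum>\<sigma>\<in>?P. measure Umeas (E \<sigma>))"
    using assms(1) sets_E by (intro measure_finite_Union) (auto simp: finite_permutations)
  also have "\<dots> = (\<Sum>\<sigma>\<in>?P. measure Umeas ?A)"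
    using measure_E by (rule sum.cong[OF refl])
  also have "\<dots> = fact (card S) * measure Umeas ?A"
    using card_permutations[OF refl assms(1)] by simp
  finally have "fact (card S) * measure Umeas ?A \<le> 1"
    using prob_le_1 by metis
  then show ?thesis by (simp add: field_simps)
qed

definition index_set :: "nat \<Rightarrow> (nat \<Rightarrow> nat) \<Rightarrow> (nat \<times> nat) set" where
  "index_set n i = Sigma {1..n} (\<lambda>l. {1..i l})"

lemma finite_index_set [simp]: "finite (index_set n i)"
  by (simp add: index_set_def)

lemma card_index_set: "card (index_set n i) = (\<Sum>l=1..n. i l)"
  by (simp add: index_set_def card_SigmaI)

lemma ptSet_eq_image: "ptSet n i u = (\<lambda>a. (u a, real (fst a))) ` index_set n i"
  unfolding ptSet_def index_set_def by force

lemma finite_ptSet [simp]: "finite (ptSet n i u)"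
  by (simp add: ptSet_eq_image)

lemma chainLen_ptSet_le: "chainLen (ptSet n i u) \<le> (\<Sum>l=1..n. i l)"
proof -
  have "chainLen (ptSet n i u) \<le> card (ptSet n i u)"
    by (rule chainLen_le_card) simp
  also have "\<dots> \<le> card (index_set n i)"
    unfolding ptSet_eq_image by (rule card_image_le) simp
  finally show ?thesis by (simp add: card_index_set)
qed

lemma chainLen_ptSet_ge_iff:
  "{u. k \<le> chainLen (ptSet n i u)} =
    (\<Union>S\<in>{S. S \<subseteq> index_set n i \<and> card S = k \<and> inj_on fst S}.
       {u. monotone_on S (\<lambda>a b. fst a < fst b) (<) u})"
  unfolding ptSet_eq_image chainLen_image_ge_iff[OF finite_index_set] by blast

lemma sets_chainLen_ptSet_ge [measurable]: "{u. k \<le> chainLen (ptSet n i u)} \<in> sets Umeas"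
  unfolding chainLen_ptSet_ge_iff
  by (intro sets.finite_UN) (auto intro: finite_subset[of _ "Pow (index_set n i)"])

lemma prob_chainLen_ptSet_ge:
  "measure Umeas {u. k \<le> chainLen (ptSet n i u)} \<le> min 1 (((\<Sum>l=1..n. i l) choose k) / fact k)"
proof -
  interpret prob_space Umeas by (rule prob_space_Umeas)
  let ?\<S> = "{S. S \<subseteq> index_set n i \<and> card S = k \<and> inj_on fst S}"
  have fin: "finite ?\<S>"
    by (rule finite_subset[of _ "Pow (index_set n i)"]) auto
  have "measure Umeas {u. k \<le> chainLen (ptSet n i u)}
      \<le> (\<Sum>S\<in>?\<S>. measure Umeas {u. monotone_on S (\<lambda>a b. fst a < fst b) (<) u})"
    unfolding chainLen_ptSet_ge_iff by (rule measure_UNION_le[OF fin]) simp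
  also have "\<dots> \<le> (\<Sum>S\<in>?\<S>. 1 / fact k)"
  proof (rule sum_mono)
    fix S assume "S \<in> ?\<S>"
    then have "finite S" "inj_on fst S" "card S = k"
      using finite_subset[of S "index_set n i"] by auto
    then show "measure Umeas {u. monotone_on S (\<lambda>a b. fst a < fst b) (<) u} \<le> 1 / fact k"
      using measure_monotone_on_Umeas_le[of S fst] by simp
  qed
  also have "\<dots> \<le> card {S. S \<subseteq> index_set n i \<and> card S = k} / fact k"
  proof -
    have "finite {S. S \<subseteq> index_set n i \<and> card S = k}"
      by (rule finite_subset[of _ "Pow (index_set n i)"]) auto
    then have "card ?\<S> \<le> card {S. S \<subseteq> index_set n i \<and> card S = k}"
      by (rule card_mono) blast
    then show ?thesis
      by (simp add: divide_right_mono)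
  qed
  also have "\<dots> = ((\<Sum>l=1..n. i l) choose k) / fact k"
    by (simp add: n_subsets card_index_set)
  finally show ?thesis by (simp add: prob_le_1)
qed

lemma of_nat_eq_sum_indicator:
  "m \<le> N \<Longrightarrow> real m = (\<Sum>k=1..N. if k \<le> m then 1 else 0)"
proof -
  assume "m \<le> N"
  then have "{1..N} \<inter> {k. k \<le> m} = {1..m}" by auto
  then show ?thesis by (simp add: sum.If_cases)
qed

lemma
  shows integrable_chainLen_ptSet: "integrable Umeas (\<lambda>u. real (chainLen (ptSet n i u)))"
    and eL_eq_sum_prob:
      "eL n i = (\<Sum>k=1..(\<Sum>l=1..n. i l). measure Umeas {u. k \<le> chainLen (ptSet n i u)})"
proof -
  interpret prob_space Umeas by (rule prob_space_Umeas)
  let ?A = "\<lambda>k. {u. k \<le> chainLen (ptSet n i u)}"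
  have layers: "real (chainLen (ptSet n i u)) = (\<Sum>k=1..(\<Sum>l=1..n. i l). indicator (?A k) u)" for u
  proof -
    have "real (chainLen (ptSet n i u))
        = (\<Sum>k=1..(\<Sum>l=1..n. i l). if k \<le> chainLen (ptSet n i u) then 1 else 0)"
      by (rule of_nat_eq_sum_indicator[OF chainLen_ptSet_le])
    also have "\<dots> = (\<Sum>k=1..(\<Sum>l=1..n. i l). indicator (?A k) u)"
      by (rule sum.cong) (simp_all add: indicator_def)
    finally show ?thesis .
  qed
  have integrable_A: "integrable Umeas (indicator (?A k) :: _ \<Rightarrow> real)" for k
    by (rule integrable_real_indicator) (auto simp: less_top[symmetric])
  show "integrable Umeas (\<lambda>u. real (chainLen (ptSet n i u)))"
    unfolding layers using integrable_A by simp
  show "eL n i = (\<Sum>k=1..(\<Sum>l=1..n. i l). measure Umeas (?A k))"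
    unfolding eL_def layers using integrable_A by simp
qed

lemma power_div_fact_le_exp:
  fixes x :: real
  assumes "0 \<le> x"
  shows "x ^ k / fact k \<le> exp x"
proof -
  have "(\<Sum>m\<in>{k}. x ^ m / fact m) \<le> (\<Sum>m. x ^ m / fact m)"
    using assms summable_exp_generic[of x]
    by (intro sum_le_suminf) (auto simp: divide_inverse ac_simps)
  then show ?thesis by (simp add: exp_def divide_inverse ac_simps)
qed

lemma power_div_three_le_fact: "(real k / 3) ^ k \<le> fact k"
proof -
  have "real k ^ k / fact k \<le> exp 1 ^ k"
    using power_div_fact_le_exp[of "real k" k] by (simp add: exp_of_nat_mult[symmetric])
  also have "\<dots> \<le> 3 ^ k"
    by (intro power_mono exp_le) simp
  finally show ?thesis by (simp add: power_divide field_simps)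
qed

lemma binomial_div_fact_le_half_power:
  assumes "18 * real N \<le> real k ^ 2"
  shows "real (N choose k) / fact k \<le> (1/2) ^ k"
proof -
  have "real (N choose k) * fact k \<le> real N ^ k"
    using binomial_fact_pow[of N k] by (metis of_nat_fact of_nat_le_iff of_nat_mult of_nat_power)
  then have "real (N choose k) / fact k \<le> real N ^ k / (fact k * fact k)"
    by (simp add: field_simps)
  also have "\<dots> \<le> real N ^ k / ((real k / 3) ^ k * (real k / 3) ^ k)"
    using power_div_three_le_fact[of k] assms
    by (cases "k = 0") (auto intro!: divide_left_mono mult_mono mult_pos_pos)
  also have "\<dots> = real N ^ k / (real k ^ 2 / 9) ^ k"
    by (simp only: power_mult_distrib[symmetric]) (simp add: power2_eq_square)
  also have "\<dots> = (9 * real N / real k ^ 2) ^ k"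
    by (simp add: power_divide)
  also have "\<dots> \<le> (1/2) ^ k"
    using assms by (intro power_mono) (auto simp: divide_le_eq)
  finally show ?thesis .
qed

lemma sum_min_binomial_div_fact_le:
  "(\<Sum>k=1..N. min 1 (real (N choose k) / fact k)) \<le> 6 * sqrt (real N)"
proof (cases "N = 0")
  case True
  then show ?thesis by simp
next
  case False
  let ?f = "\<lambda>k. min 1 (real (N choose k) / fact k)"
  define A where "A = {k\<in>{1..N}. real k ^ 2 < 18 * real N}"
  define B where "B = {k\<in>{1..N}. 18 * real N \<le> real k ^ 2}"
  have "{1..N} = A \<union> B"
    by (auto simp: A_def B_def)
  then have "(\<Sum>k=1..N. ?f k) = sum ?f A + sum ?f B"
    by (simp only:) (rule sum.union_disjoint; auto simp: A_def B_def)
  also have "sum ?f A \<le> card A"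
    using sum_mono[of A ?f "\<lambda>_. 1"] by simp
  also have "card A \<le> sqrt (18 * real N)"
  proof -
    have "A \<subseteq> {1..nat \<lfloor>sqrt (18 * real N)\<rfloor>}"
      by (auto simp: A_def le_nat_floor real_less_rsqrt less_imp_le)
    then have "card A \<le> nat \<lfloor>sqrt (18 * real N)\<rfloor>"
      using card_mono[of "{1..nat \<lfloor>sqrt (18 * real N)\<rfloor>}" A] by simp
    then have "real (card A) \<le> real (nat \<lfloor>sqrt (18 * real N)\<rfloor>)"
      by (rule of_nat_mono)
    also have "\<dots> \<le> sqrt (18 * real N)"
      by (rule of_nat_floor) simp
    finally show ?thesis .
  qed
  also have "sum ?f B \<le> (\<Sum>k=1..N. (1/2) ^ k)"
    using binomial_div_fact_le_half_power
    by (intro order.trans[OF sum_mono sum_mono2]) (auto simp: B_def min.coboundedI2)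
  also have "(\<Sum>k=1..N. (1/2::real) ^ k) = 1 - (1/2) ^ N"
    by (induction N) (simp_all add: sum.cl_ivl_Suc)
  also have "\<dots> \<le> 1"
    by simp
  also have "sqrt (18 * real N) + 1 \<le> 6 * sqrt (real N)"
  proof -
    have "sqrt 18 \<le> (5::real)"
      by (simp add: real_sqrt_le_iff real_le_lsqrt)
    moreover have "1 \<le> sqrt (real N)"
      using False by simp
    ultimately show ?thesis
      unfolding real_sqrt_mult using mult_right_mono[of "sqrt 18" 5 "sqrt (real N)"] by linarith
  qed
  finally show ?thesis by simp
qed

lemma index_set_add_subset:
  "index_set n (\<lambda>l. i l + j l) \<subseteq> index_set n i \<union> (\<lambda>(l, r). (l, r + i l)) ` index_set n j"
proof
  fix a assume "a \<in> index_set n (\<lambda>l. i l + j l)"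
  then obtain l r where a: "a = (l, r)" "l \<in> {1..n}" "r \<in> {1..i l + j l}"
    by (auto simp: index_set_def)
  show "a \<in> index_set n i \<union> (\<lambda>(l, r). (l, r + i l)) ` index_set n j"
  proof (cases "r \<le> i l")
    case True
    then show ?thesis using a by (simp add: index_set_def)
  next
    case False
    then have "(l, r - i l) \<in> index_set n j" using a by (auto simp: index_set_def)
    then show ?thesis using a False by (force intro: image_eqI[of _ _ "(l, r - i l)"])
  qed
qed

lemma ptSet_add_subset:
  "ptSet n (\<lambda>l. i l + j l) u \<subseteq> ptSet n i u \<union> ptSet n j (u \<circ> (\<lambda>(l, r). (l, r + i l)))"
proof -
  let ?\<phi> = "\<lambda>a. (u a, real (fst a))"
  have "ptSet n (\<lambda>l. i l + j l) u \<subseteq> ?\<phi> ` (index_set n i \<union> (\<lambda>(l, r). (l, r + i l)) ` index_set n j)"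
    unfolding ptSet_eq_image by (rule image_mono[OF index_set_add_subset])
  also have "\<dots> = ptSet n i u \<union> ptSet n j (u \<circ> (\<lambda>(l, r). (l, r + i l)))"
    unfolding image_Un ptSet_eq_image image_image by (simp add: case_prod_beta)
  finally show ?thesis .
qed

lemma eL_mono: "eL n i \<le> eL n (\<lambda>l. i l + j l)"
proof -
  have "ptSet n i u \<subseteq> ptSet n (\<lambda>l. i l + j l) u" for u
    unfolding ptSet_eq_image index_set_def by (intro image_mono Sigma_mono) auto
  then show ?thesis
    unfolding eL_def
    by (intro integral_mono integrable_chainLen_ptSet of_nat_mono chainLen_mono finite_ptSet)
qed

lemma eL_add_le: "eL n (\<lambda>l. i l + j l) \<le> eL n i + eL n j"
proof -
  define g where "g = (\<lambda>(l, r). (l, r + i l :: nat))"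
  have "inj g" by (auto simp: g_def inj_def)
  have measurable_j: "(\<lambda>u. real (chainLen (ptSet n j u))) \<in> borel_measurable Umeas"
    using integrable_chainLen_ptSet by blast
  note reindex = integral_reindex_Umeas[OF \<open>inj g\<close> measurable_j]
  have pointwise: "real (chainLen (ptSet n (\<lambda>l. i l + j l) u))
      \<le> real (chainLen (ptSet n i u)) + real (chainLen (ptSet n j (u \<circ> g)))" for u
  proof -
    have "chainLen (ptSet n (\<lambda>l. i l + j l) u) \<le> chainLen (ptSet n i u \<union> ptSet n j (u \<circ> g))"
      using ptSet_add_subset unfolding g_def by (intro chainLen_mono) auto
    also have "\<dots> \<le> chainLen (ptSet n i u) + chainLen (ptSet n j (u \<circ> g))"
      by (intro chainLen_Un finite_ptSet)
    finally show ?thesis by linarith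
  qed
  have "integrable Umeas (\<lambda>u. real (chainLen (ptSet n j (u \<circ> g))))"
    using reindex(1) integrable_chainLen_ptSet by blast
  then have "eL n (\<lambda>l. i l + j l)
      \<le> (\<integral>u. real (chainLen (ptSet n i u)) + real (chainLen (ptSet n j (u \<circ> g))) \<partial>Umeas)"
    unfolding eL_def using pointwise
    by (intro integral_mono integrable_chainLen_ptSet Bochner_Integration.integrable_add)
  also have "\<dots> = eL n i + eL n j"
    unfolding eL_def using reindex integrable_chainLen_ptSet by simp
  finally show ?thesis .
qed

theorem mainTheorem8:
  fixes n :: nat and i j :: "nat \<Rightarrow> nat"
  shows "eL n i \<le> eL n (\<lambda>l. i l + j l)
       \<and> eL n (\<lambda>l. i l + j l) \<le> eL n i + eL n j
       \<and> eL n i \<le> 6 * sqrt (real (\<Sum>l=1..n. i l))"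
proof (intro conjI eL_mono eL_add_le)
  have "eL n i \<le> (\<Sum>k=1..(\<Sum>l=1..n. i l). min 1 (real ((\<Sum>l=1..n. i l) choose k) / fact k))"
    unfolding eL_eq_sum_prob by (intro sum_mono prob_chainLen_ptSet_ge)
  also have "\<dots> \<le> 6 * sqrt (real (\<Sum>l=1..n. i l))"
    by (rule sum_min_binomial_div_fact_le)
  finally show "eL n i \<le> 6 * sqrt (real (\<Sum>l=1..n. i l))" .
qed

end
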